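(* Assume $\sqrt T\le W\le T$ and $968kS\le T$. Let $\tau$ be the smallest integer $r\ge1$ such that, after the first $r$ rounds of uniform sampling, some arm $i$ satisfies $\sum_{s=1}^{n_i(r)}Y_{i,s}>420c^2\log W$, where $n_i(r)$ is the number of $r'\le r$ with $U_{r'}=i$. Then on the event $E$, $$128kS\le\tau\le 968kS.$$
   Context: Bandit setup: $k$ arms, arm $i$ a distribution on $[0,1]$ with mean $\mu_i$, $\mu^*:=\max_i\mu_i>0$. $\log$ is the natural logarithm; $c:=3$; $T$ is the overall horizon, $W$ a window length (positive integer), and $S:=\frac{c^2\log T}{\mu^*}$. Canonical model: a $k\times T$ table $(Y_{i,s})$ of independent entries with $Y_{i,s}$ distributed as arm $i$, the $s$-th pull of arm $i$ yielding $Y_{i,s}$; $\widehat\mu_{i,s}:=\frac1s\sum_{r=1}^sY_{i,r}$. Uniform sampling is modeled by independent uniform $U_1,\dots,U_T\in[k]$ (independent of the table); the $r$-th round of uniform sampling pulls $U_r$. Events: $E_1$: for every integer $r$ with $128kS\le r\le T$ and every arm $i$, the number of $r'\le r$ with $U_{r'}=i$ is at least $\frac{r}{2k}$ and at most $\frac{3r}{2k}$. $E_2$: for every arm $i$ with $\mu_i>\frac{\mu^*}{64}$ and every integer $s$ with $64S\le s\le T$, $|\mu_i-\widehat\mu_{i,s}|\le c\sqrt{\frac{\mu_i\log T}{s}}$. $E_3$: for every arm $j$ with $\mu_j\le\frac{\mu^*}{64}$ and every integer $s$ with $64S\le s\le T$, $\widehat\mu_{j,s}<\frac{\mu^*}{32}$.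 $E:=E_1\cap E_2\cap E_3$. *)

theory Defs
  imports Complex_Main
begin

text \<open>Arms are indexed by {1..k}; rounds and pull counts start at 1.
  A realization consists of means mu, the reward table Y (Y i s = s-th pull of arm i)
  and the uniform-sampling sequence U (U r = arm pulled in round r).\<close>

definition c_const :: real where "c_const = 3"

definition mu_star :: "nat \<Rightarrow> (nat \<Rightarrow> real) \<Rightarrow> real" where
  "mu_star k mu = Max (mu ` {1..k})"

definition S_par :: "nat \<Rightarrow> (nat \<Rightarrow> real) \<Rightarrow> nat \<Rightarrow> real" where
  "S_par k mu T = c_const^2 * ln (real T) / mu_star k mu"

definition pulls :: "(nat \<Rightarrow> nat) \<Rightarrow> nat \<Rightarrow> nat \<Rightarrow> nat" where
  "pulls U i r = card {r' \<in> {1..r}. U r' = i}"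

definition emp_mean :: "(nat \<Rightarrow> nat \<Rightarrow> real) \<Rightarrow> nat \<Rightarrow> nat \<Rightarrow> real" where
  "emp_mean Y i s = (\<Sum>r=1..s. Y i r) / real s"

definition event_E1 :: "nat \<Rightarrow> (nat \<Rightarrow> real) \<Rightarrow> nat \<Rightarrow> (nat \<Rightarrow> nat) \<Rightarrow> bool" where
  "event_E1 k mu T U \<longleftrightarrow>
     (\<forall>r::nat. 128 * real k * S_par k mu T \<le> real r \<and> r \<le> T \<longrightarrow>
        (\<forall>i\<in>{1..k}. real r / (2 * real k) \<le> real (pulls U i r)
                    \<and> real (pulls U i r) \<le> 3 * real r / (2 * real k)))"

definition event_E2 :: "nat \<Rightarrow> (nat \<Rightarrow> real) \<Rightarrow> nat \<Rightarrow> (nat \<Rightarrow> nat \<Rightarrow> real) \<Rightarrow> bool" where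
  "event_E2 k mu T Y \<longleftrightarrow>
     (\<forall>i\<in>{1..k}. mu i > mu_star k mu / 64 \<longrightarrow>
        (\<forall>s::nat. 64 * S_par k mu T \<le> real s \<and> s \<le> T \<longrightarrow>
           \<bar>mu i - emp_mean Y i s\<bar> \<le> c_const * sqrt (mu i * ln (real T) / real s)))"

definition event_E3 :: "nat \<Rightarrow> (nat \<Rightarrow> real) \<Rightarrow> nat \<Rightarrow> (nat \<Rightarrow> nat \<Rightarrow> real) \<Rightarrow> bool" where
  "event_E3 k mu T Y \<longleftrightarrow>
     (\<forall>j\<in>{1..k}. mu j \<le> mu_star k mu / 64 \<longrightarrow>
        (\<forall>s::nat. 64 * S_par k mu T \<le> real s \<and> s \<le> T \<longrightarrow>
           emp_mean Y j s < mu_star k mu / 32))"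

definition event_E where
  "event_E k mu T U Y \<longleftrightarrow> event_E1 k mu T U \<and> event_E2 k mu T Y \<and> event_E3 k mu T Y"

definition tau :: "nat \<Rightarrow> nat \<Rightarrow> nat \<Rightarrow> (nat \<Rightarrow> nat) \<Rightarrow> (nat \<Rightarrow> nat \<Rightarrow> real) \<Rightarrow> nat" where
  "tau k T W U Y = (LEAST r. 1 \<le> r \<and> r \<le> T \<and>
     (\<exists>i\<in>{1..k}. (\<Sum>s=1..pulls U i r. Y i s) > 420 * c_const^2 * ln (real W)))"

end

theory Submission
  imports Defs
begin

text \<open>The threshold 420 c^2 log W lies between 1890 log T and 3780 log T because
  sqrt T \<le> W \<le> T. On E, after 968kS rounds the best arm has been pulled n \<ge> 484S - 1/2 times,
  so its reward sum is at least n mu^* - 3 sqrt(mu^* n log T) \<ge> 4030 log T: the threshold has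
  been crossed. After only 128kS rounds every arm has n \<le> 192S + 3/2 pulls, so n mu^* \<le> 1731 log T;
  a good arm has then collected at most n mu_i + 3 sqrt(mu_i n log T) \<le> 1890 log T and a bad arm
  (mu_j \<le> mu^*/64) less than n mu^*/32. Reward sums only grow, so tau lies between the two rounds.\<close>

lemma pulls_mono: "r \<le> r' \<Longrightarrow> pulls U i r \<le> pulls U i r'"
  unfolding pulls_def by (intro card_mono) auto

lemma pulls_le: "pulls U i r \<le> r"
proof -
  have "pulls U i r \<le> card {1..r}" unfolding pulls_def by (intro card_mono) auto
  then show ?thesis by simp
qed

lemma sum_eq_mult_emp_mean: "0 < n \<Longrightarrow> (\<Sum>s=1..n. Y i s) = real n * emp_mean Y i n"
  unfolding emp_mean_def by simp

lemma mult_sqrt_divide: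
  fixes x a :: real
  assumes "0 < x"
  shows "x * sqrt (a / x) = sqrt (a * x)"
proof -
  have "x * sqrt (a / x) = sqrt x * (sqrt x * sqrt (a / x))" using assms by simp
  also have "sqrt x * sqrt (a / x) = sqrt a" using assms by (simp add: real_sqrt_mult[symmetric])
  finally show ?thesis by (simp add: real_sqrt_mult mult.commute)
qed

lemma sub_three_sqrt_ge:
  fixes L x :: real
  assumes "0 < L" "4355 * L \<le> x"
  shows "4030 * L \<le> x - 3 * sqrt (L * x)"
proof -
  define q where "q = sqrt (L * x)"
  have q_sq: "q\<^sup>2 = L * x" unfolding q_def using assms by simp
  have "(65 * L)\<^sup>2 \<le> L * x"
    using mult_left_mono[OF assms(2), of L] assms(1) by (simp add: power2_eq_square)
  then have q_ge: "65 * L \<le> q" unfolding q_def by (rule real_le_rsqrt)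
  have "L * (4030 * L) \<le> q * (q - 3 * L)"
    using mult_mono[OF q_ge, of "62 * L" "q - 3 * L"] q_ge assms(1) by (simp add: algebra_simps)
  also have "\<dots> = L * (x - 3 * q)" using q_sq by (simp add: power2_eq_square algebra_simps)
  finally show ?thesis unfolding q_def using assms(1) by simp
qed

lemma add_three_sqrt_le:
  fixes L x :: real
  assumes "0 \<le> L" "0 \<le> x" "x \<le> 1731 * L"
  shows "x + 3 * sqrt (L * x) \<le> 1890 * L"
proof -
  have "L * x \<le> (42 * L)\<^sup>2"
  proof -
    have "L * x \<le> 1731 * (L * L)" using mult_left_mono[OF assms(3) assms(1)] by simp
    also have "\<dots> \<le> (42 * L)\<^sup>2" using assms(1) by (simp add: power2_eq_square)
    finally show ?thesis .
  qed
  then have "sqrt (L * x) \<le> 42 * L" using assms(1) by (intro real_le_lsqrt) auto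
  then show ?thesis using assms(1,3) by linarith
qed

lemma ln_ge_half: "2 \<le> x \<Longrightarrow> 1/2 \<le> ln (x::real)"
  using exp_half_le2 by (subst ln_ge_iff) auto

lemma abs_sum_deviation_le:
  assumes "0 < n" "\<bar>\<mu> - emp_mean Y i n\<bar> \<le> C * sqrt (a / real n)"
  shows "\<bar>real n * \<mu> - (\<Sum>s=1..n. Y i s)\<bar> \<le> C * sqrt (a * real n)"
proof -
  have "\<bar>real n * \<mu> - (\<Sum>s=1..n. Y i s)\<bar> = real n * \<bar>\<mu> - emp_mean Y i n\<bar>"
    unfolding sum_eq_mult_emp_mean[OF assms(1)]
    by (simp add: abs_mult right_diff_distrib[symmetric])
  also have "\<dots> \<le> real n * (C * sqrt (a / real n))"
    using assms(2) by (intro mult_left_mono) auto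
  also have "\<dots> = C * sqrt (a * real n)"
    using assms(1) by (simp add: mult_sqrt_divide mult.left_commute)
  finally show ?thesis .
qed

definition threshold_crossed :: "nat \<Rightarrow> nat \<Rightarrow> (nat \<Rightarrow> nat) \<Rightarrow> (nat \<Rightarrow> nat \<Rightarrow> real) \<Rightarrow> nat \<Rightarrow> bool"
  where "threshold_crossed k W U Y r \<longleftrightarrow>
    (\<exists>i\<in>{1..k}. 420 * c_const^2 * ln (real W) < (\<Sum>s=1..pulls U i r. Y i s))"

lemma tau_eq_Least: "tau k T W U Y = (LEAST r. 1 \<le> r \<and> r \<le> T \<and> threshold_crossed k W U Y r)"
  unfolding tau_def threshold_crossed_def by simp

lemma tau_le:
  "1 \<le> r \<Longrightarrow> r \<le> T \<Longrightarrow> threshold_crossed k W U Y r \<Longrightarrow> tau k T W U Y \<le> r"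
  unfolding tau_eq_Least by (rule Least_le) simp

lemma threshold_crossed_mono:
  assumes "threshold_crossed k W U Y r" "r \<le> r'" "r' \<le> T"
    and "\<forall>i\<in>{1..k}. \<forall>s\<in>{1..T}. 0 \<le> Y i s"
  shows "threshold_crossed k W U Y r'"
proof -
  obtain i where i: "i \<in> {1..k}"
    and crossed: "420 * c_const^2 * ln (real W) < (\<Sum>s=1..pulls U i r. Y i s)"
    using assms(1) unfolding threshold_crossed_def by blast
  have "pulls U i r' \<le> T" using pulls_le[of U i r'] assms(3) by linarith
  then have "(\<Sum>s=1..pulls U i r. Y i s) \<le> (\<Sum>s=1..pulls U i r'. Y i s)"
    using pulls_mono[OF assms(2)] assms(4) i by (intro sum_mono2) auto
  then show ?thesis using crossed i unfolding threshold_crossed_def by force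
qed

lemma less_tau:
  assumes "1 \<le> r" "r \<le> T" "threshold_crossed k W U Y r"
    and "r0 \<le> T" "\<not> threshold_crossed k W U Y r0"
    and "\<forall>i\<in>{1..k}. \<forall>s\<in>{1..T}. 0 \<le> Y i s"
  shows "r0 < tau k T W U Y"
proof (rule ccontr)
  assume "\<not> r0 < tau k T W U Y"
  moreover have "threshold_crossed k W U Y (tau k T W U Y)"
    using assms(1-3) LeastI_ex[of "\<lambda>r. 1 \<le> r \<and> r \<le> T \<and> threshold_crossed k W U Y r"]
    unfolding tau_eq_Least by blast
  ultimately show False
    using threshold_crossed_mono assms(4-6) by (meson not_less)
qed

locale uniform_exploration =
  fixes k T W :: nat and mu :: "nat \<Rightarrow> real"
    and Y :: "nat \<Rightarrow> nat \<Rightarrow> real" and U :: "nat \<Rightarrow> nat"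
  assumes k_pos: "k \<ge> 1"
    and T_ge_2: "T \<ge> 2"
    and W_pos: "W \<ge> 1"
    and mu_range: "\<forall>i\<in>{1..k}. 0 \<le> mu i \<and> mu i \<le> 1"
    and mu_star_pos: "mu_star k mu > 0"
    and Y_nonneg: "\<forall>i\<in>{1..k}. \<forall>s\<in>{1..T}. 0 \<le> Y i s"
    and W_lo: "sqrt (real T) \<le> real W" and W_hi: "W \<le> T"
    and T_big: "968 * real k * S_par k mu T \<le> real T"
    and E: "event_E k mu T U Y"
begin

abbreviation "m \<equiv> mu_star k mu"
abbreviation "L \<equiv> ln (real T)"
abbreviation "S \<equiv> S_par k mu T"

lemma L_ge_half: "1/2 \<le> L"
  using T_ge_2 by (intro ln_ge_half) simp

lemma threshold_between_L: "1890 * L \<le> 420 * c_const^2 * ln (real W)"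
  "420 * c_const^2 * ln (real W) \<le> 3780 * L"
proof -
  have "real T \<le> (real W)\<^sup>2" using W_lo by (rule sqrt_le_D)
  then have "L \<le> ln ((real W)\<^sup>2)" using T_ge_2 W_pos by (subst ln_le_cancel_iff) auto
  then have "L \<le> 2 * ln (real W)" using W_pos by (simp add: ln_realpow)
  moreover have "ln (real W) \<le> L" using W_pos W_hi by simp
  ultimately show "1890 * L \<le> 420 * c_const^2 * ln (real W)"
    "420 * c_const^2 * ln (real W) \<le> 3780 * L"
    by (simp_all add: c_const_def)
qed

lemma best_arm_exists: obtains i where "i \<in> {1..k}" "mu i = m"
proof -
  have "m \<in> mu ` {1..k}" unfolding mu_star_def using k_pos by (intro Max_in) auto
  then obtain i where "i \<in> {1..k}" "mu i = m" by (metis imageE)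
  then show ?thesis by (rule that)
qed

lemma mu_le_mu_star: "i \<in> {1..k} \<Longrightarrow> mu i \<le> m"
  unfolding mu_star_def by simp

lemma mu_star_le_1: "m \<le> 1"
  using best_arm_exists mu_range by metis

lemma S_eq: "S = 9 * L / m"
  unfolding S_par_def c_const_def by simp

lemma S_ge: "9 * L \<le> S"
proof -
  have "9 * L / 1 \<le> 9 * L / m"
    using mu_star_pos mu_star_le_1 L_ge_half by (intro divide_left_mono) auto
  then show ?thesis by (simp add: S_eq)
qed

lemma kS_ge: "9/2 \<le> real k * S"
proof -
  have "S \<le> real k * S" using S_ge L_ge_half k_pos mult_right_mono[of 1 "real k" S] by simp
  then show ?thesis using S_ge L_ge_half by linarith
qed

lemma pulls_between:
  assumes "128 * real k * S \<le> real r" "r \<le> T" "i \<in> {1..k}"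
  shows "real r / (2 * real k) \<le> real (pulls U i r)" "real (pulls U i r) \<le> 3 * real r / (2 * real k)"
  using E assms unfolding event_E_def event_E1_def by auto

lemma arm_sum_le:
  assumes i: "i \<in> {1..k}"
    and n: "64 * S \<le> real n" "n \<le> T" "real n * m \<le> 1731 * L"
  shows "(\<Sum>s=1..n. Y i s) \<le> 1890 * L"
proof -
  have n_pos: "0 < n" using n(1) S_ge L_ge_half by simp
  have mu_i: "0 \<le> mu i" "mu i \<le> m" using mu_range mu_le_mu_star i by auto
  show ?thesis
  proof (cases "m / 64 < mu i")
    case True
    then have "\<bar>mu i - emp_mean Y i n\<bar> \<le> c_const * sqrt (mu i * L / real n)"
      using E i n(1,2) unfolding event_E_def event_E2_def by auto
    then have "\<bar>real n * mu i - (\<Sum>s=1..n. Y i s)\<bar> \<le> 3 * sqrt (mu i * L * real n)"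
      unfolding c_const_def by (rule abs_sum_deviation_le[OF n_pos])
    also have "\<dots> = 3 * sqrt (L * (real n * mu i))" by (simp add: mult_ac)
    finally have "\<bar>real n * mu i - (\<Sum>s=1..n. Y i s)\<bar> \<le> 3 * sqrt (L * (real n * mu i))" .
    moreover have "real n * mu i + 3 * sqrt (L * (real n * mu i)) \<le> 1890 * L"
      using mu_i L_ge_half n(3) mult_left_mono[OF mu_i(2), of "real n"]
      by (intro add_three_sqrt_le) auto
    ultimately show ?thesis by linarith
  next
    case False
    then have "emp_mean Y i n < m / 32"
      using E i n(1,2) unfolding event_E_def event_E3_def by auto
    then have "real n * emp_mean Y i n \<le> real n * (m / 32)" by (intro mult_left_mono) auto
    then have "(\<Sum>s=1..n. Y i s) \<le> real n * m / 32"
      unfolding sum_eq_mult_emp_mean[OF n_pos] by simp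
    then show ?thesis using n(3) L_ge_half by linarith
  qed
qed

lemma best_arm_sum_ge:
  assumes i: "i \<in> {1..k}" "mu i = m"
    and n: "64 * S \<le> real n" "n \<le> T" "4355 * L \<le> real n * m"
  shows "4030 * L \<le> (\<Sum>s=1..n. Y i s)"
proof -
  have n_pos: "0 < n" using n(1) S_ge L_ge_half by simp
  have "m / 64 < mu i" using i(2) mu_star_pos by simp
  then have "\<bar>mu i - emp_mean Y i n\<bar> \<le> c_const * sqrt (mu i * L / real n)"
    using E i(1) n(1,2) unfolding event_E_def event_E2_def by auto
  then have "\<bar>real n * m - (\<Sum>s=1..n. Y i s)\<bar> \<le> 3 * sqrt (m * L * real n)"
    unfolding c_const_def i(2) by (rule abs_sum_deviation_le[OF n_pos])
  also have "\<dots> = 3 * sqrt (L * (real n * m))" by (simp add: mult_ac)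
  finally have "\<bar>real n * m - (\<Sum>s=1..n. Y i s)\<bar> \<le> 3 * sqrt (L * (real n * m))" .
  moreover have "4030 * L \<le> real n * m - 3 * sqrt (L * (real n * m))"
    using L_ge_half n(3) by (intro sub_three_sqrt_ge) auto
  ultimately show ?thesis by linarith
qed

lemma crossed_by_968kS:
  obtains r where "1 \<le> r" "r \<le> T" "real r \<le> 968 * real k * S" "threshold_crossed k W U Y r"
proof -
  define r where "r = nat \<lfloor>968 * real k * S\<rfloor>"
  have r_le: "real r \<le> 968 * real k * S" and r_ge: "968 * real k * S - 1 \<le> real r"
    unfolding r_def using kS_ge by linarith+
  have r_T: "r \<le> T" using r_le T_big by linarith
  obtain i where i: "i \<in> {1..k}" "mu i = m" by (rule best_arm_exists)
  define n where "n = pulls U i r"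
  have r_ge_128: "128 * real k * S \<le> real r" using r_ge kS_ge by linarith
  have "484 * S - 1/2 \<le> 484 * S - 1 / (2 * real k)" using k_pos by (simp add: field_simps)
  also have "\<dots> = (968 * real k * S - 1) / (2 * real k)" using k_pos by (simp add: field_simps)
  also have "\<dots> \<le> real r / (2 * real k)" using r_ge k_pos by (intro divide_right_mono) auto
  also have "\<dots> \<le> real n" unfolding n_def using r_ge_128 r_T i(1) by (rule pulls_between(1))
  finally have n_ge: "484 * S - 1/2 \<le> real n" .
  have "4356 * L - m / 2 = (484 * S - 1/2) * m"
    using mu_star_pos by (simp add: S_eq field_simps)
  also have "\<dots> \<le> real n * m" using n_ge mu_star_pos by (intro mult_right_mono) auto
  finally have "4355 * L \<le> real n * m" using mu_star_le_1 L_ge_half by linarith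
  moreover have "64 * S \<le> real n" using n_ge S_ge L_ge_half by linarith
  moreover have "n \<le> T" using pulls_le r_T unfolding n_def by (rule le_trans)
  ultimately have "4030 * L \<le> (\<Sum>s=1..n. Y i s)" using i by (intro best_arm_sum_ge)
  then have "420 * c_const^2 * ln (real W) < (\<Sum>s=1..pulls U i r. Y i s)"
    using threshold_between_L(2) L_ge_half unfolding n_def by linarith
  then have "threshold_crossed k W U Y r" unfolding threshold_crossed_def using i(1) by blast
  moreover have "1 \<le> r" using r_ge kS_ge by linarith
  ultimately show ?thesis using r_T r_le by (intro that)
qed

lemma not_crossed_after_128kS:
  obtains r where "128 * real k * S \<le> real r" "r \<le> T" "\<not> threshold_crossed k W U Y r"
proof -
  \<comment> \<open>E1 says nothing about rounds before 128kS, hence the ceiling.\<close>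
  define r where "r = nat \<lceil>128 * real k * S\<rceil>"
  have r_ge: "128 * real k * S \<le> real r" and r_lt: "real r < 128 * real k * S + 1"
    unfolding r_def using kS_ge by linarith+
  have r_T: "r \<le> T" using r_lt T_big kS_ge by linarith
  have "(\<Sum>s=1..pulls U i r. Y i s) \<le> 420 * c_const^2 * ln (real W)" if i: "i \<in> {1..k}" for i
  proof -
    define n where "n = pulls U i r"
    have k_gt: "0 < real k" using k_pos by simp
    have "64 * S = 128 * real k * S / (2 * real k)" using k_gt by simp
    also have "\<dots> \<le> real r / (2 * real k)" using r_ge k_gt by (intro divide_right_mono) auto
    also have "\<dots> \<le> real n" unfolding n_def using r_ge r_T i by (rule pulls_between(1))
    finally have n_ge: "64 * S \<le> real n" .
    have "real n \<le> 3 * real r / (2 * real k)" unfolding n_def using r_ge r_T i by (rule pulls_between(2))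
    also have "\<dots> \<le> 3 * (128 * real k * S + 1) / (2 * real k)"
      using r_lt k_gt by (intro divide_right_mono) auto
    also have "\<dots> = 192 * S + 3 / (2 * real k)" using k_gt by (simp add: field_simps)
    also have "\<dots> \<le> 192 * S + 3/2" using k_pos by (simp add: field_simps)
    finally have "real n * m \<le> (192 * S + 3/2) * m" using mu_star_pos by (intro mult_right_mono) auto
    also have "\<dots> = 1728 * L + 3/2 * m" using mu_star_pos by (simp add: S_eq field_simps)
    finally have "real n * m \<le> 1731 * L" using mu_star_le_1 L_ge_half by linarith
    moreover have "n \<le> T" using pulls_le r_T unfolding n_def by (rule le_trans)
    ultimately have "(\<Sum>s=1..n. Y i s) \<le> 1890 * L" using i n_ge by (intro arm_sum_le)
    then show ?thesis using threshold_between_L(1) unfolding n_def by linarith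
  qed
  then have "\<not> threshold_crossed k W U Y r" unfolding threshold_crossed_def by (auto simp: not_less)
  then show ?thesis using r_ge r_T by (intro that)
qed

end

theorem lemma8:
  fixes k T W :: nat and mu :: "nat \<Rightarrow> real"
    and Y :: "nat \<Rightarrow> nat \<Rightarrow> real" and U :: "nat \<Rightarrow> nat"
  assumes k: "k \<ge> 1"
    and T: "T \<ge> 2"
    and W: "W \<ge> 1"
    and mu_range: "\<forall>i\<in>{1..k}. 0 \<le> mu i \<and> mu i \<le> 1"
    and mu_pos: "mu_star k mu > 0"
    and Y_range: "\<forall>i\<in>{1..k}. \<forall>s\<in>{1..T}. 0 \<le> Y i s \<and> Y i s \<le> 1"
    and U_range: "\<forall>r\<in>{1..T}. U r \<in> {1..k}"
    and W_lo: "sqrt (real T) \<le> real W" and W_hi: "W \<le> T"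
    and T_big: "968 * real k * S_par k mu T \<le> real T"
    and E: "event_E k mu T U Y"
  shows "128 * real k * S_par k mu T \<le> real (tau k T W U Y)
       \<and> real (tau k T W U Y) \<le> 968 * real k * S_par k mu T"
proof -
  have Y_nonneg: "\<forall>i\<in>{1..k}. \<forall>s\<in>{1..T}. 0 \<le> Y i s" using Y_range by auto
  interpret uniform_exploration k T W mu Y U
    using k T W mu_range mu_pos Y_nonneg W_lo W_hi T_big E by unfold_locales
  obtain r where r: "1 \<le> r" "r \<le> T" "real r \<le> 968 * real k * S" "threshold_crossed k W U Y r"
    by (rule crossed_by_968kS)
  obtain r0 where r0: "128 * real k * S \<le> real r0" "r0 \<le> T" "\<not> threshold_crossed k W U Y r0"
    by (rule not_crossed_after_128kS)
  have "tau k T W U Y \<le> r" using r(1,2,4) by (rule tau_le)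
  moreover have "r0 < tau k T W U Y" using r(1,2,4) r0(2,3) Y_nonneg by (rule less_tau)
  ultimately have "real (tau k T W U Y) \<le> real r" "real r0 \<le> real (tau k T W U Y)" by simp_all
  then show ?thesis using r(3) r0(1) by linarith
qed

end
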